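(* For $n\ge 2$, let $\mathscr{C}_n=\langle Q,\{a,b\},\delta\rangle$ be the Černý automaton with $Q=\{0,1,\dots,n-1\}$, where $\delta(i,b)=i+1$ for $0\le i\le n-2$, $\delta(n-1,b)=0$, $\delta(i,a)=i$ for $0\le i\le n-2$, and $\delta(n-1,a)=0$. Then $sc(Syn(\mathscr{C}_n))=2^n-n$.
   Context: For a DFA $\mathscr{A}=\langle Q,\Sigma,\delta\rangle$ (total transition function, extended to words), $Syn(\mathscr{A})$ is the set of words $w\in\Sigma^*$ such that $\delta(q,w)=\delta(q',w)$ for all $q,q'\in Q$. The state complexity $sc(L)$ of a regular language $L$ is the number of states of the minimal (complete) DFA recognizing $L$. *)

theory Defs
  imports Main
begin

definition delta_star :: "('s \<Rightarrow> 'a \<Rightarrow> 's) \<Rightarrow> 's \<Rightarrow> 'a list \<Rightarrow> 's" where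
  "delta_star \<delta> q w = foldl \<delta> q w"

definition Syn :: "'s set \<Rightarrow> ('s \<Rightarrow> 'a \<Rightarrow> 's) \<Rightarrow> 'a list set" where
  "Syn Q \<delta> = {w. \<forall>q\<in>Q. \<forall>q'\<in>Q. delta_star \<delta> q w = delta_star \<delta> q' w}"

text \<open>A complete DFA with k states, states encoded as {0..<k} (any finite state set
  can be renamed to this one), recognizing the language L over the alphabet UNIV.\<close>
definition dfa_recognizes :: "nat \<Rightarrow> (nat \<Rightarrow> 'a \<Rightarrow> nat) \<Rightarrow> nat \<Rightarrow> nat set \<Rightarrow> 'a list set \<Rightarrow> bool" where
  "dfa_recognizes k \<delta> q0 F L \<longleftrightarrow>
     q0 < k \<and> F \<subseteq> {0..<k} \<and> (\<forall>q<k. \<forall>x. \<delta> q x < k) \<and>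
     L = {w. delta_star \<delta> q0 w \<in> F}"

definition sc :: "'a list set \<Rightarrow> nat" where
  "sc L = (LEAST k. \<exists>\<delta> q0 F. dfa_recognizes k \<delta> q0 F L)"

datatype letter = a | b

fun cerny :: "nat \<Rightarrow> nat \<Rightarrow> letter \<Rightarrow> nat" where
  "cerny n i b = (if i = n - 1 then 0 else i + 1)"
| "cerny n i a = (if i = n - 1 then 0 else i)"

end

theory Submission
  imports Defs
begin

(* A DFA for Syn(A) is the subset automaton of A run from the full state set, with all sets
   of at most one state merged into a single accepting sink; for n states this has 2^n - n
   states. For the Cerny automaton it is minimal: b rotates the states cyclically and a
   merges n - 1 into 0, so every nonempty set of states is reachable (a k-element set is
   obtained from a (k+1)-element one), and two distinct states of the subset automaton are
   separated by a word b^(n-1-x) (b^(n-1) a)^(n-2), which sends x to 1 and all other states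
   to 0. Distinguishable reachable states force as many states in any DFA for Syn(C_n). *)

lemma delta_star_Nil [simp]: "delta_star \<delta> q [] = q"
  by (simp add: delta_star_def)

lemma delta_star_Cons [simp]: "delta_star \<delta> q (x # w) = delta_star \<delta> (\<delta> q x) w"
  by (simp add: delta_star_def)

lemma delta_star_append: "delta_star \<delta> q (u @ v) = delta_star \<delta> (delta_star \<delta> q u) v"
  by (simp add: delta_star_def)

lemma delta_star_closed:
  assumes "\<And>q x. q \<in> Q \<Longrightarrow> \<delta> q x \<in> Q" and "q \<in> Q"
  shows "delta_star \<delta> q w \<in> Q"
  using assms(2) by (induction w arbitrary: q) (auto intro: assms(1))

definition image_word :: "('s \<Rightarrow> 'a \<Rightarrow> 's) \<Rightarrow> 's set \<Rightarrow> 'a list \<Rightarrow> 's set" where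
  "image_word \<delta> S w = (\<lambda>q. delta_star \<delta> q w) ` S"

lemma image_word_Nil [simp]: "image_word \<delta> S [] = S"
  by (simp add: image_word_def)

lemma image_word_append: "image_word \<delta> S (u @ v) = image_word \<delta> (image_word \<delta> S u) v"
  by (simp add: image_word_def image_image delta_star_append)

definition subsingleton :: "'a set \<Rightarrow> bool" where
  "subsingleton S \<longleftrightarrow> (\<forall>p\<in>S. \<forall>q\<in>S. p = q)"

lemma subsingleton_empty [simp]: "subsingleton {}"
  by (simp add: subsingleton_def)

lemma subsingleton_singleton [simp]: "subsingleton {x}"
  by (simp add: subsingleton_def)

lemma subsingleton_subset_singleton: "S \<subseteq> {x} \<Longrightarrow> subsingleton S"
  unfolding subsingleton_def by blast

lemma not_subsingletonI: "x \<in> S \<Longrightarrow> y \<in> S \<Longrightarrow> x \<noteq> y \<Longrightarrow> \<not> subsingleton S"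
  unfolding subsingleton_def by blast

lemma not_subsingleton_obtain_other:
  assumes "\<not> subsingleton S" "x \<in> S"
  obtains y where "y \<in> S" "y \<noteq> x"
  using assms unfolding subsingleton_def by blast

lemma subsingleton_image: "subsingleton S \<Longrightarrow> subsingleton (f ` S)"
  by (auto simp: subsingleton_def)

lemma Syn_eq_subsingleton: "Syn Q \<delta> = {w. subsingleton (image_word \<delta> Q w)}"
  by (simp add: Syn_def subsingleton_def image_word_def)

lemma sc_eqI:
  assumes "dfa_recognizes k \<delta> q0 F L"
    and "\<And>k' \<delta>' q0' F'. dfa_recognizes k' \<delta>' q0' F' L \<Longrightarrow> k \<le> k'"
  shows "sc L = k"
  unfolding sc_def by (rule Least_equality) (use assms in blast)+

lemma dfa_recognizes_card_le:
  assumes L: "dfa_recognizes k \<delta> q0 F L"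
    and distinguishable: "\<And>i j. i \<in> I \<Longrightarrow> j \<in> I \<Longrightarrow> i \<noteq> j \<Longrightarrow> \<exists>v. (u i @ v \<in> L) \<noteq> (u j @ v \<in> L)"
  shows "card I \<le> k"
proof -
  define \<phi> where "\<phi> i = delta_star \<delta> q0 (u i)" for i
  have accept: "u i @ v \<in> L \<longleftrightarrow> delta_star \<delta> (\<phi> i) v \<in> F" for i v
    using L by (simp add: dfa_recognizes_def \<phi>_def delta_star_append)
  have "inj_on \<phi> I"
  proof (rule inj_onI, rule ccontr)
    fix i j assume "i \<in> I" "j \<in> I" "\<phi> i = \<phi> j" "i \<noteq> j"
    then show False using distinguishable[of i j] by (auto simp: accept)
  qed
  moreover have "\<phi> ` I \<subseteq> {0..<k}"
    using L delta_star_closed[of "{0..<k}" \<delta>] by (auto simp: dfa_recognizes_def \<phi>_def)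
  ultimately show ?thesis
    using card_inj_on_le[of \<phi> I "{0..<k}"] by simp
qed

lemma dfa_recognizes_card_finite:
  fixes d :: "'s \<Rightarrow> 'a \<Rightarrow> 's"
  assumes "finite Y" and closed: "\<And>y x. y \<in> Y \<Longrightarrow> d y x \<in> Y" and "y0 \<in> Y" and "F \<subseteq> Y"
  shows "\<exists>\<delta> q0 F'. dfa_recognizes (card Y) \<delta> q0 F' {w. delta_star d y0 w \<in> F}"
proof -
  obtain g where g: "bij_betw g Y {0..<card Y}"
    using ex_bij_betw_finite_nat \<open>finite Y\<close> by blast
  define \<delta> where "\<delta> i x = g (d (inv_into Y g i) x)" for i x
  have run: "delta_star \<delta> (g y) w = g (delta_star d y w)" if "y \<in> Y" for y w
    using that by (induction w arbitrary: y)
      (simp_all add: \<delta>_def bij_betw_inv_into_left[OF g] closed)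
  have "dfa_recognizes (card Y) \<delta> (g y0) (g ` F) {w. delta_star d y0 w \<in> F}"
    unfolding dfa_recognizes_def
  proof (intro conjI allI impI)
    show "g y0 < card Y" "g ` F \<subseteq> {0..<card Y}"
      using g \<open>y0 \<in> Y\<close> \<open>F \<subseteq> Y\<close> by (auto simp: bij_betw_def)
    show "\<delta> q x < card Y" if "q < card Y" for q x
    proof -
      have "inv_into Y g q \<in> Y"
        using that g by (auto simp: bij_betw_def intro: inv_into_into)
      then show ?thesis using g closed by (auto simp: \<delta>_def bij_betw_def)
    qed
    have "inj_on g Y" using g by (simp add: bij_betw_def)
    then show "{w. delta_star d y0 w \<in> F} = {w. delta_star \<delta> (g y0) w \<in> g ` F}"
      using \<open>y0 \<in> Y\<close> \<open>F \<subseteq> Y\<close> delta_star_closed[of Y d, OF closed]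
      by (simp add: run inj_on_image_mem_iff)
  qed
  then show ?thesis by blast
qed

text \<open>In the subset automaton of a DFA, all subsingleton subsets are merged into the single
  accepting sink \<open>{}\<close>.\<close>
definition collapse :: "'s set \<Rightarrow> 's set" where
  "collapse S = (if subsingleton S then {} else S)"

lemma collapse_eq_empty_iff: "collapse S = {} \<longleftrightarrow> subsingleton S"
  by (cases "S = {}") (simp_all add: collapse_def subsingleton_def)

lemma collapse_image_collapse: "collapse (f ` collapse S) = collapse (f ` S)"
  by (simp add: collapse_def subsingleton_image)

lemma dfa_recognizes_Syn:
  assumes "finite Q" and closed: "\<And>q x. q \<in> Q \<Longrightarrow> \<delta> q x \<in> Q"
  shows "\<exists>\<delta>' q0 F. dfa_recognizes (card (insert {} {S. S \<subseteq> Q \<and> \<not> subsingleton S})) \<delta>' q0 F (Syn Q \<delta>)"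
proof -
  define Y where "Y = insert {} {S. S \<subseteq> Q \<and> \<not> subsingleton S}"
  define d where "d S x = collapse (image_word \<delta> S [x])" for S x
  have run: "delta_star d (collapse S) w = collapse (image_word \<delta> S w)" for S w
  proof (induction w arbitrary: S)
    case (Cons x w)
    have "d (collapse S) x = collapse (image_word \<delta> S [x])"
      unfolding d_def image_word_def by (rule collapse_image_collapse)
    then show ?case using Cons.IH[of "image_word \<delta> S [x]"] image_word_append[of \<delta> S "[x]" w]
      by simp
  qed (simp add: image_word_def)
  have "collapse (image_word \<delta> S [x]) \<in> Y" if "S \<subseteq> Q" for S x
    using that closed by (auto simp: Y_def collapse_def image_word_def)
  then have "d S x \<in> Y" if "S \<in> Y" for S x
    using that by (auto simp: Y_def d_def)
  moreover have "collapse Q \<in> Y"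
    by (auto simp: Y_def collapse_def)
  moreover have "finite Y"
    using \<open>finite Q\<close> by (auto simp: Y_def intro: finite_subset[of _ "Pow Q"])
  ultimately obtain \<delta>' q0 F
    where "dfa_recognizes (card Y) \<delta>' q0 F {w. delta_star d (collapse Q) w \<in> {{}}}"
    using dfa_recognizes_card_finite[of Y d "collapse Q" "{{}}"] by (auto simp: Y_def)
  then show ?thesis
    by (auto simp: Y_def run collapse_eq_empty_iff Syn_eq_subsingleton)
qed

lemma card_insert_nonsubsingleton_subsets:
  assumes "finite Q" and "subsingleton A"
  shows "card (insert A {S. S \<subseteq> Q \<and> \<not> subsingleton S}) = 2 ^ card Q - card Q"
proof -
  let ?N = "{S. S \<subseteq> Q \<and> \<not> subsingleton S}" and ?T = "{S. S \<subseteq> Q \<and> subsingleton S}"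
  have "?T = insert {} ((\<lambda>q. {q}) ` Q)"
    by (auto simp: subsingleton_def)
  moreover have "card ((\<lambda>q. {q}) ` Q) = card Q" "{} \<notin> (\<lambda>q. {q}) ` Q"
    by (auto intro: card_image simp: inj_on_def)
  ultimately have card_T: "card ?T = card Q + 1"
    using \<open>finite Q\<close> by simp
  have "Pow Q = ?N \<union> ?T"
    by auto
  then have "2 ^ card Q = card (?N \<union> ?T)"
    using \<open>finite Q\<close> by (metis card_Pow)
  also have "\<dots> = card ?N + card ?T"
    using \<open>finite Q\<close> by (intro card_Un_disjoint) auto
  finally have "2 ^ card Q = card ?N + card ?T" .
  moreover have "A \<notin> ?N" "finite ?N"
    using assms by auto
  ultimately show ?thesis
    using card_T by simp
qed

lemma dfa_recognizes_Syn_card_le: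
  assumes L: "dfa_recognizes k \<delta>' q0 F (Syn Q \<delta>)"
    and reachable: "\<And>S. S \<in> I \<Longrightarrow> \<exists>w. image_word \<delta> Q w = S"
    and distinguishable: "\<And>S T. S \<in> I \<Longrightarrow> T \<in> I \<Longrightarrow> S \<noteq> T \<Longrightarrow>
      \<exists>v. subsingleton (image_word \<delta> S v) \<noteq> subsingleton (image_word \<delta> T v)"
  shows "card I \<le> k"
proof -
  define u where "u S = (SOME w. image_word \<delta> Q w = S)" for S
  have "u S @ v \<in> Syn Q \<delta> \<longleftrightarrow> subsingleton (image_word \<delta> S v)" if "S \<in> I" for S v
    using someI_ex[OF reachable[OF that]]
    by (simp add: u_def Syn_eq_subsingleton image_word_append)
  then show ?thesis
    using dfa_recognizes_card_le[OF L, of I u] distinguishable by metis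
qed

lemma cerny_closed: "q < n \<Longrightarrow> cerny n q x < n"
  by (cases x) auto

lemma cerny_b: "q < n \<Longrightarrow> cerny n q b = Suc q mod n"
  by (cases "Suc q = n") auto

lemma delta_star_cerny_b_power:
  "q < n \<Longrightarrow> delta_star (cerny n) q (replicate j b) = (q + j) mod n"
proof (induction j arbitrary: q)
  case (Suc j)
  then have "Suc q mod n < n" by simp
  with Suc show ?case by (simp add: cerny_b mod_add_left_eq)
qed simp

definition cyclic_shift :: "nat \<Rightarrow> nat \<Rightarrow> nat set \<Rightarrow> nat set" where
  "cyclic_shift n j S = (\<lambda>q. (q + j) mod n) ` S"

lemma image_word_cerny_b_power:
  assumes "S \<subseteq> {0..<n}"
  shows "image_word (cerny n) S (replicate j b) = cyclic_shift n j S"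
  unfolding image_word_def cyclic_shift_def
  by (rule image_cong) (use assms delta_star_cerny_b_power in auto)

lemma cyclic_shift_cyclic_shift: "cyclic_shift n k (cyclic_shift n j S) = cyclic_shift n (j + k) S"
  by (simp add: cyclic_shift_def image_image mod_add_left_eq add.assoc)

lemma shift_mod_inverse:
  fixes q :: nat
  assumes "q < n"
  shows "((q + j) mod n + (n - 1) * j) mod n = q"
proof -
  have "((q + j) mod n + (n - 1) * j) mod n = (q + j + (n - 1) * j) mod n"
    by (rule mod_add_left_eq)
  also have "q + j + (n - 1) * j = q + n * j"
    using assms by (cases n) (simp_all add: algebra_simps)
  finally show ?thesis
    using assms by simp
qed

lemma inj_on_shift_mod: "inj_on (\<lambda>q::nat. (q + j) mod n) {0..<n}"
  by (rule inj_on_inverseI[where g = "\<lambda>q. (q + (n - 1) * j) mod n"], rule shift_mod_inverse) simp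

lemma cyclic_shift_subset: "S \<subseteq> {0..<n} \<Longrightarrow> cyclic_shift n j S \<subseteq> {0..<n}"
  by (auto simp: cyclic_shift_def)

lemma card_cyclic_shift: "S \<subseteq> {0..<n} \<Longrightarrow> card (cyclic_shift n j S) = card S"
  unfolding cyclic_shift_def by (rule card_image) (rule inj_on_subset[OF inj_on_shift_mod])

lemma cyclic_shift_inverse:
  assumes "S \<subseteq> {0..<n}"
  shows "cyclic_shift n ((n - 1) * j) (cyclic_shift n j S) = S"
proof -
  have "cyclic_shift n ((n - 1) * j) (cyclic_shift n j S) = (\<lambda>q. q) ` S"
    unfolding cyclic_shift_def image_image
    by (rule image_cong) (use assms shift_mod_inverse in auto)
  then show ?thesis by simp
qed

text \<open>Rotate a state missing from \<open>S\<close> to \<open>n - 1\<close>, then the least element of the result to \<open>0\<close>.\<close>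
lemma cyclic_shift_to_gap:
  assumes S: "S \<subseteq> {0..<n}" "S \<noteq> {}" "S \<noteq> {0..<n}"
  shows "\<exists>j. 0 \<in> cyclic_shift n j S \<and> n - 1 \<notin> cyclic_shift n j S"
proof -
  have "\<not> {0..<n} \<subseteq> S"
    using S(1,3) by blast
  then obtain c where c: "c < n" "c \<notin> S"
    by (meson atLeastLessThan_iff subsetI zero_le)
  define S' where "S' = cyclic_shift n (n - 1 - c) S"
  have last: "n - 1 \<notin> S'"
  proof
    assume "n - 1 \<in> S'"
    then obtain q where "q \<in> S" "(q + (n - 1 - c)) mod n = (c + (n - 1 - c)) mod n"
      using c by (auto simp: S'_def cyclic_shift_def)
    then have "q = c"
      using inj_on_shift_mod[of "n - 1 - c" n] S(1) c
      unfolding inj_on_def by (metis atLeastLessThan_iff subsetD zero_le)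
    with c \<open>q \<in> S\<close> show False by simp
  qed
  have "S' \<subseteq> {0..<n}" "S' \<noteq> {}"
    using S cyclic_shift_subset by (auto simp: S'_def cyclic_shift_def)
  have S'_below: "S' \<subseteq> {0..<n - 1}"
  proof
    fix q assume "q \<in> S'"
    with \<open>S' \<subseteq> {0..<n}\<close> last have "q < n" "q \<noteq> n - 1"
      by auto
    then show "q \<in> {0..<n - 1}"
      by simp
  qed
  define m where "m = Min S'"
  have m: "m \<in> S'" "\<And>q. q \<in> S' \<Longrightarrow> m \<le> q"
    using \<open>S' \<noteq> {}\<close> finite_subset[OF S'_below] by (simp_all add: m_def)
  have "cyclic_shift n (n - m) S' = (\<lambda>q. q - m) ` S'"
    unfolding cyclic_shift_def
  proof (rule image_cong)
    fix q assume "q \<in> S'"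
    then have "q + (n - m) = (q - m) + n" "q - m < n"
      using m S'_below by auto
    then show "(q + (n - m)) mod n = q - m" by simp
  qed simp
  moreover have "0 \<in> (\<lambda>q. q - m) ` S'" "n - 1 \<notin> (\<lambda>q. q - m) ` S'"
    using m S'_below by force+
  ultimately show ?thesis
    unfolding S'_def cyclic_shift_cyclic_shift by metis
qed

lemma image_word_cerny_a:
  assumes "0 \<in> S" "n - 1 \<notin> S"
  shows "image_word (cerny n) (insert (n - 1) S) [a] = S"
proof -
  have "cerny n q a = q" if "q \<in> S" for q
    using that assms(2) by auto
  then have "(\<lambda>q. cerny n q a) ` S = S"
    by (simp cong: image_cong)
  with assms show ?thesis
    by (auto simp: image_word_def)
qed

text \<open>Every nonempty set of states is reachable: a set \<open>S\<close> is obtained from a set with one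
  more element by merging \<open>n - 1\<close> into \<open>0\<close> with \<open>a\<close>, up to rotations by powers of \<open>b\<close>.\<close>
lemma cerny_reachable:
  assumes "S \<subseteq> {0..<n}" "S \<noteq> {}"
  shows "\<exists>w. image_word (cerny n) {0..<n} w = S"
  using assms
proof (induction "n - card S" arbitrary: S rule: less_induct)
  case less
  show ?case
  proof (cases "S = {0..<n}")
    case True
    then show ?thesis
      using image_word_Nil by metis
  next
    case False
    then obtain j where j: "0 \<in> cyclic_shift n j S" "n - 1 \<notin> cyclic_shift n j S"
      using cyclic_shift_to_gap less.prems by blast
    define S' where "S' = cyclic_shift n j S"
    have S': "S' \<subseteq> {0..<n}" "card S' = card S"
      using less.prems by (simp_all add: S'_def cyclic_shift_subset card_cyclic_shift)
    have "card S < n"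
      using psubset_card_mono[of "{0..<n}" S] less.prems False by auto
    moreover have "card (insert (n - 1) S') = Suc (card S)"
      using S' j by (simp add: S'_def finite_subset)
    moreover have "insert (n - 1) S' \<subseteq> {0..<n}"
      using S' j by (auto simp: S'_def)
    ultimately have "\<exists>w. image_word (cerny n) {0..<n} w = insert (n - 1) S'"
      by (intro less.hyps) auto
    then obtain w where w: "image_word (cerny n) {0..<n} w = insert (n - 1) S'" ..
    have "image_word (cerny n) {0..<n} (w @ [a] @ replicate ((n - 1) * j) b)
        = image_word (cerny n) (image_word (cerny n) (insert (n - 1) S') [a])
            (replicate ((n - 1) * j) b)"
      by (simp only: image_word_append w)
    also have "\<dots> = image_word (cerny n) S' (replicate ((n - 1) * j) b)"
      by (simp only: S'_def image_word_cerny_a[OF j])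
    also have "\<dots> = S"
      using image_word_cerny_b_power[OF S'(1)] cyclic_shift_inverse[OF less.prems(1)]
      by (simp only: S'_def)
    finally show ?thesis by blast
  qed
qed

lemma delta_star_cerny_decrement:
  assumes "q < n"
  shows "delta_star (cerny n) q (replicate (n - 1) b @ [a]) = q - 1"
proof (cases q)
  case 0
  with assms show ?thesis
    by (simp add: delta_star_append delta_star_cerny_b_power)
next
  case (Suc p)
  with assms have "(q + (n - 1)) mod n = p"
    by (simp add: mod_if)
  with assms Suc show ?thesis
    by (simp add: delta_star_append delta_star_cerny_b_power)
qed

lemma delta_star_cerny_decrement_power:
  "q < n \<Longrightarrow> delta_star (cerny n) q (concat (replicate k (replicate (n - 1) b @ [a]))) = q - k"
proof (induction k arbitrary: q)
  case (Suc k)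
  let ?w = "replicate (n - 1) b @ [a]"
  have "delta_star (cerny n) q (concat (replicate (Suc k) ?w))
      = delta_star (cerny n) (delta_star (cerny n) q ?w) (concat (replicate k ?w))"
    by (simp only: replicate_Suc concat.simps(2) delta_star_append[of "cerny n" q ?w])
  also have "\<dots> = delta_star (cerny n) (q - 1) (concat (replicate k ?w))"
    by (simp only: delta_star_cerny_decrement[OF Suc.prems])
  also have "\<dots> = q - Suc k"
    using Suc by simp
  finally show ?case .
qed simp

text \<open>The word \<open>b\<^sup>n\<^sup>-\<^sup>1\<^sup>-\<^sup>x (b\<^sup>n\<^sup>-\<^sup>1a)\<^sup>n\<^sup>-\<^sup>2\<close> sends \<open>x\<close> to \<open>1\<close> and every other state to \<open>0\<close>:
  the rotation moves \<open>x\<close> to \<open>n - 1\<close>, and each factor \<open>b\<^sup>n\<^sup>-\<^sup>1a\<close> acts as \<open>q \<mapsto> q - 1\<close>.\<close>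
lemma cerny_separating_word:
  assumes "2 \<le> n" "x < n"
  shows "\<exists>z. \<forall>q<n. delta_star (cerny n) q z = (if q = x then 1 else 0)"
proof -
  define z where "z = replicate (n - 1 - x) b @ concat (replicate (n - 2) (replicate (n - 1) b @ [a]))"
  have "delta_star (cerny n) q z = (if q = x then 1 else 0)" if "q < n" for q
  proof -
    define p where "p = (q + (n - 1 - x)) mod n"
    have "(x + (n - 1 - x)) mod n = n - 1"
      using assms by simp
    then have "p = n - 1 \<longleftrightarrow> q = x"
      using inj_on_shift_mod[of "n - 1 - x" n] that assms(2)
      unfolding inj_on_def p_def by (metis atLeastLessThan_iff zero_le)
    moreover have "p < n"
      using assms by (simp add: p_def)
    moreover from this have "delta_star (cerny n) q z = p - (n - 2)"
      unfolding z_def delta_star_append delta_star_cerny_b_power[OF that] p_def[symmetric]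
      by (rule delta_star_cerny_decrement_power)
    ultimately show ?thesis
      using assms by auto
  qed
  then show ?thesis by blast
qed

lemma cerny_separates:
  assumes "2 \<le> n" "A \<subseteq> {0..<n}" "\<not> subsingleton A" "x \<in> A" "B \<subseteq> {0..<n}" "x \<notin> B"
  shows "\<exists>v. \<not> subsingleton (image_word (cerny n) A v) \<and> subsingleton (image_word (cerny n) B v)"
proof -
  obtain y where "y \<in> A" "y \<noteq> x"
    using assms(3,4) by (rule not_subsingleton_obtain_other)
  have "x < n" "y < n"
    using assms(2,4) \<open>y \<in> A\<close> by auto
  obtain z where z: "\<And>q. q < n \<Longrightarrow> delta_star (cerny n) q z = (if q = x then 1 else 0)"
    using cerny_separating_word[OF assms(1) \<open>x < n\<close>] by blast
  from \<open>x < n\<close> \<open>y < n\<close> have "delta_star (cerny n) x z = 1" "delta_star (cerny n) y z = 0"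
    using z \<open>y \<noteq> x\<close> by simp_all
  then have "\<not> subsingleton (image_word (cerny n) A z)"
    unfolding image_word_def
    by (intro not_subsingletonI[of 1 _ 0]) (use assms(4) \<open>y \<in> A\<close> in \<open>force+\<close>)
  moreover have "subsingleton (image_word (cerny n) B z)"
    by (rule subsingleton_subset_singleton[of _ 0])
      (use assms(5,6) z in \<open>auto simp: image_word_def subset_iff\<close>)
  ultimately show ?thesis
    by blast
qed

lemma cerny_distinguishable:
  assumes "2 \<le> n"
    and "S \<in> insert {0} {S. S \<subseteq> {0..<n} \<and> \<not> subsingleton S}"
    and "T \<in> insert {0} {S. S \<subseteq> {0..<n} \<and> \<not> subsingleton S}"
    and "S \<noteq> T"
  shows "\<exists>v. subsingleton (image_word (cerny n) S v) \<noteq> subsingleton (image_word (cerny n) T v)"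
proof (cases "subsingleton S = subsingleton T")
  case True
  with assms(2-4) have S: "S \<subseteq> {0..<n}" "\<not> subsingleton S"
    and T: "T \<subseteq> {0..<n}" "\<not> subsingleton T"
    by auto
  from \<open>S \<noteq> T\<close> obtain x where "x \<in> S \<and> x \<notin> T \<or> x \<in> T \<and> x \<notin> S"
    by blast
  then obtain v where "subsingleton (image_word (cerny n) S v) \<noteq> subsingleton (image_word (cerny n) T v)"
    using cerny_separates[OF assms(1) S _ T(1)] cerny_separates[OF assms(1) T _ S(1)] by blast
  then show ?thesis ..
next
  case False
  then show ?thesis
    by (intro exI[of _ "[]"]) simp
qed

theorem proposition2:
  fixes n :: nat
  assumes "n \<ge> 2"
  shows "sc (Syn {0..<n} (cerny n)) = 2 ^ n - n"
proof -
  let ?N = "{S. S \<subseteq> {0..<n} \<and> \<not> subsingleton S}"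
  have card: "card (insert A ?N) = 2 ^ n - n" if "subsingleton A" for A
    using card_insert_nonsubsingleton_subsets[OF finite_atLeastLessThan that] by simp
  obtain \<delta> q0 F where "dfa_recognizes (2 ^ n - n) \<delta> q0 F (Syn {0..<n} (cerny n))"
    using dfa_recognizes_Syn[of "{0..<n}" "cerny n"] card[of "{}"] by (auto simp: cerny_closed)
  then show ?thesis
  proof (rule sc_eqI)
    fix k \<delta>' q0' F' assume "dfa_recognizes k \<delta>' q0' F' (Syn {0..<n} (cerny n))"
    then have "card (insert {0} ?N) \<le> k"
    proof (rule dfa_recognizes_Syn_card_le)
      show "\<exists>w. image_word (cerny n) {0..<n} w = S" if "S \<in> insert {0} ?N" for S
        using that assms by (intro cerny_reachable) auto
    qed (rule cerny_distinguishable[OF assms])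
    then show "2 ^ n - n \<le> k"
      using card[of "{0}"] by simp
  qed
qed

end
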